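(* Let $A\| B$ be a right D2 extension and $\mathcal E=\mathrm{End}({}_BA)$. Then $\Psi:A\otimes_BA\to\mathrm{Hom}(\mathcal E_A,A_A)$, $\Psi(a\otimes a')(f)=af(a')$, is an isomorphism of left $B$-modules, with inverse $F\mapsto\sum_jF(\gamma_j)u_j^1\otimes u_j^2$ for any right D2 quasibase $\gamma_j,u_j$. Here $\mathcal E$ is a right $A$-module via $(f\cdot a)(x)=f(x)a$, and $\mathrm{Hom}(\mathcal E_A,A_A)$ is a left $B$-module via $(bF)(f)=bF(f)$.
   Context: Algebras over a commutative ring $K$; $A\| B$ a unit-preserving algebra homomorphism $B\to A$; $S=\mathrm{End}({}_BA_B)$; $T=(A\otimes_BA)^B$ with Sweedler notation $t=t^1\otimes t^2$. $A\| B$ is right D2 if $A\otimes_BA$ is isomorphic as an $A$-$B$-bimodule to a direct summand of some $A^n$; equivalently there are finitely many $\gamma_j\in S,u_j\in T$ with $a\otimes_Ba'=\sum_ja\gamma_j(a')u_j^1\otimes u_j^2$ for all $a,a'$ (right D2 quasibase). *)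

theory Defs
  imports Main "HOL-Library.Poly_Mapping"
begin

text \<open>Algebras are rendered as (not necessarily commutative) rings with unit;
 the extension A | B is a unit preserving ring homomorphism beta : B -> A.\<close>

definition ring_hom_1 :: "('b::ring_1 \<Rightarrow> 'a::ring_1) \<Rightarrow> bool" where
  "ring_hom_1 \<beta> \<longleftrightarrow> \<beta> 1 = 1 \<and> (\<forall>x y. \<beta> (x + y) = \<beta> x + \<beta> y)
      \<and> (\<forall>x y. \<beta> (x * y) = \<beta> x * \<beta> y)"

text \<open>A representative of an element is a list of pairs
 [(x1,y1),...,(xk,yk)] standing for the sum of the simple tensors xi \<otimes> yi
 (every element has such a representative, since -(x\<otimes>y) = (-x)\<otimes>y).
 Two representatives are equal in A \<otimes>_B A iff their difference in the free
 abelian group on A \<times> A lies in the subgroup generated by the bilinearity and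
 B-balancedness relators.\<close>

definition simple_t :: "'a \<Rightarrow> 'a \<Rightarrow> ('a \<times> 'a \<Rightarrow>\<^sub>0 int)" where
  "simple_t x y = Poly_Mapping.single (x, y) 1"

definition free_t :: "('a \<times> 'a) list \<Rightarrow> ('a \<times> 'a \<Rightarrow>\<^sub>0 int)" where
  "free_t u = sum_list (map (\<lambda>(x, y). simple_t x y) u)"

inductive_set tensor_kernel :: "('b::ring_1 \<Rightarrow> 'a::ring_1) \<Rightarrow> ('a \<times> 'a \<Rightarrow>\<^sub>0 int) set"
  for \<beta> where
  zero: "0 \<in> tensor_kernel \<beta>"
| diff: "p \<in> tensor_kernel \<beta> \<Longrightarrow> q \<in> tensor_kernel \<beta> \<Longrightarrow> p - q \<in> tensor_kernel \<beta>"
| addl: "simple_t (x + x') y - simple_t x y - simple_t x' y \<in> tensor_kernel \<beta>"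
| addr: "simple_t x (y + y') - simple_t x y - simple_t x y' \<in> tensor_kernel \<beta>"
| bal:  "simple_t (x * \<beta> b) y - simple_t x (\<beta> b * y) \<in> tensor_kernel \<beta>"

definition teq :: "('b::ring_1 \<Rightarrow> 'a::ring_1) \<Rightarrow> ('a \<times> 'a) list \<Rightarrow> ('a \<times> 'a) list \<Rightarrow> bool" where
  "teq \<beta> u v \<longleftrightarrow> free_t u - free_t v \<in> tensor_kernel \<beta>"

definition tlmul :: "'a::ring_1 \<Rightarrow> ('a \<times> 'a) list \<Rightarrow> ('a \<times> 'a) list" where
  "tlmul a u = map (\<lambda>(x, y). (a * x, y)) u"

definition trmul :: "('a \<times> 'a) list \<Rightarrow> 'a::ring_1 \<Rightarrow> ('a \<times> 'a) list" where
  "trmul u a = map (\<lambda>(x, y). (x, y * a)) u"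

definition End_lB :: "('b::ring_1 \<Rightarrow> 'a::ring_1) \<Rightarrow> ('a \<Rightarrow> 'a) set" where
  "End_lB \<beta> = {f. (\<forall>x y. f (x + y) = f x + f y) \<and> (\<forall>b x. f (\<beta> b * x) = \<beta> b * f x)}"

definition End_BB :: "('b::ring_1 \<Rightarrow> 'a::ring_1) \<Rightarrow> ('a \<Rightarrow> 'a) set" where
  "End_BB \<beta> = {f. f \<in> End_lB \<beta> \<and> (\<forall>b x. f (x * \<beta> b) = f x * \<beta> b)}"

definition Tcent :: "('b::ring_1 \<Rightarrow> 'a::ring_1) \<Rightarrow> ('a \<times> 'a) list set" where
  "Tcent \<beta> = {u. \<forall>b. teq \<beta> (tlmul (\<beta> b) u) (trmul u (\<beta> b))}"

definition qb_sum :: "nat \<Rightarrow> (nat \<Rightarrow> 'a \<Rightarrow> 'a) \<Rightarrow> (nat \<Rightarrow> ('a \<times> 'a) list)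
     \<Rightarrow> (nat \<Rightarrow> 'a::ring_1) \<Rightarrow> ('a \<times> 'a) list" where
  "qb_sum n \<gamma> u c = concat (map (\<lambda>j. tlmul (c j) (u j)) [0..<n])"

definition right_D2_quasibase :: "('b::ring_1 \<Rightarrow> 'a::ring_1) \<Rightarrow> nat \<Rightarrow> (nat \<Rightarrow> 'a \<Rightarrow> 'a)
     \<Rightarrow> (nat \<Rightarrow> ('a \<times> 'a) list) \<Rightarrow> bool" where
  "right_D2_quasibase \<beta> n \<gamma> u \<longleftrightarrow>
     (\<forall>j<n. \<gamma> j \<in> End_BB \<beta> \<and> u j \<in> Tcent \<beta>) \<and>
     (\<forall>a a'. teq \<beta> [(a, a')] (qb_sum n \<gamma> u (\<lambda>j. a * \<gamma> j a')))"

text \<open>Right D2: A \<otimes>_B A is isomorphic, as an A-B-bimodule, to a direct summand of A^n,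
 i.e. there is a bimodule map p : A \<otimes>_B A -> A^n with a bimodule retraction i.
 Elements of A^n are functions nat -> A vanishing at indices >= n.\<close>
definition right_D2 :: "('b::ring_1 \<Rightarrow> 'a::ring_1) \<Rightarrow> bool" where
  "right_D2 \<beta> \<longleftrightarrow> (\<exists>(n::nat) (p :: ('a \<times> 'a) list \<Rightarrow> nat \<Rightarrow> 'a) (i :: (nat \<Rightarrow> 'a) \<Rightarrow> ('a \<times> 'a) list).
      (\<forall>u v. teq \<beta> u v \<longrightarrow> p u = p v) \<and>
      (\<forall>u k. n \<le> k \<longrightarrow> p u k = 0) \<and>
      (\<forall>u v. p (u @ v) = (\<lambda>k. p u k + p v k)) \<and>
      (\<forall>a u. p (tlmul a u) = (\<lambda>k. a * p u k)) \<and>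
      (\<forall>b u. p (trmul u (\<beta> b)) = (\<lambda>k. p u k * \<beta> b)) \<and>
      (\<forall>v w. (\<forall>k\<ge>n. v k = 0) \<longrightarrow> (\<forall>k\<ge>n. w k = 0) \<longrightarrow>
          teq \<beta> (i (\<lambda>k. v k + w k)) (i v @ i w)) \<and>
      (\<forall>a v. (\<forall>k\<ge>n. v k = 0) \<longrightarrow> teq \<beta> (i (\<lambda>k. a * v k)) (tlmul a (i v))) \<and>
      (\<forall>b v. (\<forall>k\<ge>n. v k = 0) \<longrightarrow> teq \<beta> (i (\<lambda>k. v k * \<beta> b)) (trmul (i v) (\<beta> b))) \<and>
      (\<forall>u. teq \<beta> (i (p u)) u))"

text \<open>Hom(E_A, A_A): additive maps F : E -> A with F(f.a) = F(f) a, where (f.a)(x) = f(x) a.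
 Such maps are only considered on E (values outside E are irrelevant).\<close>
definition HomEA :: "('b::ring_1 \<Rightarrow> 'a::ring_1) \<Rightarrow> (('a \<Rightarrow> 'a) \<Rightarrow> 'a) set" where
  "HomEA \<beta> = {F. (\<forall>f\<in>End_lB \<beta>. \<forall>g\<in>End_lB \<beta>. F (\<lambda>x. f x + g x) = F f + F g) \<and>
                  (\<forall>f\<in>End_lB \<beta>. \<forall>a. F (\<lambda>x. f x * a) = F f * a)}"

definition Psi :: "('a::ring_1 \<times> 'a) list \<Rightarrow> ('a \<Rightarrow> 'a) \<Rightarrow> 'a" where
  "Psi u f = sum_list (map (\<lambda>(x, y). x * f y) u)"

end

theory Submission
  imports Defs
begin

text \<open>For f \<in> End(_B A) the map (a, a') \<mapsto> a f(a') is additive in each argument and B-balanced,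
  so Psi is well defined on A \<otimes>_B A. Evaluating the quasibase identity
  1 \<otimes> x = \<Sum>_j \<gamma>_j(x) u_j at f writes f as \<Sum>_j \<gamma>_j \<cdot> Psi(u_j)(f) in the right A-module E,
  so every F \<in> Hom(E_A, A_A) satisfies F(f) = \<Sum>_j F(\<gamma>_j) Psi(u_j)(f) = Psi(\<Sum>_j F(\<gamma>_j) u_j)(f).
  Conversely, summing the quasibase identity a \<otimes> a' = \<Sum>_j a \<gamma>_j(a') u_j over the simple
  tensors of t gives \<Sum>_j Psi(t)(\<gamma>_j) u_j = t. A quasibase exists because A \<otimes>_B A is a
  bimodule summand of A^n: take \<gamma>_j(x) to be the j-th coordinate of the projection of 1 \<otimes> x,
  and u_j the image of the j-th unit vector under the section.\<close>

definition free_lift :: "('k \<Rightarrow> 'c::ring_1) \<Rightarrow> ('k \<Rightarrow>\<^sub>0 int) \<Rightarrow> 'c" where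
  "free_lift g p = (\<Sum>k\<in>Poly_Mapping.keys p. of_int (Poly_Mapping.lookup p k) * g k)"

lemma free_lift_eq_sum:
  assumes "finite S" "Poly_Mapping.keys p \<subseteq> S"
  shows "free_lift g p = (\<Sum>k\<in>S. of_int (Poly_Mapping.lookup p k) * g k)"
  unfolding free_lift_def using assms by (intro sum.mono_neutral_left) (auto simp: in_keys_iff)

lemma free_lift_add: "free_lift g (p + q) = free_lift g p + free_lift g q"
proof -
  let ?S = "Poly_Mapping.keys p \<union> Poly_Mapping.keys q"
  have "free_lift g (p + q) = (\<Sum>k\<in>?S. of_int (Poly_Mapping.lookup (p + q) k) * g k)"
    using keys_add[of p q] by (intro free_lift_eq_sum) auto
  also have "\<dots> = (\<Sum>k\<in>?S. of_int (Poly_Mapping.lookup p k) * g k)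
                 + (\<Sum>k\<in>?S. of_int (Poly_Mapping.lookup q k) * g k)"
    by (simp add: lookup_add distrib_right sum.distrib)
  also have "\<dots> = free_lift g p + free_lift g q"
    by (simp add: free_lift_eq_sum[of ?S p g] free_lift_eq_sum[of ?S q g])
  finally show ?thesis .
qed

lemma free_lift_diff: "free_lift g (p - q) = free_lift g p - free_lift g q"
  using free_lift_add[of g "p - q" q] by (simp add: eq_diff_eq)

lemma free_lift_zero [simp]: "free_lift g 0 = 0"
  by (simp add: free_lift_def)

lemma free_lift_simple_t [simp]: "free_lift g (simple_t x y) = g (x, y)"
  by (simp add: free_lift_def simple_t_def)

lemma free_t_Nil [simp]: "free_t [] = 0"
  by (simp add: free_t_def)

lemma free_t_Cons [simp]: "free_t ((x, y) # u) = simple_t x y + free_t u"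
  by (simp add: free_t_def)

lemma free_t_append [simp]: "free_t (u @ v) = free_t u + free_t v"
  by (simp add: free_t_def)

lemma free_lift_free_t: "free_lift g (free_t u) = (\<Sum>(x, y)\<leftarrow>u. g (x, y))"
  by (induction u) (auto simp: free_lift_add)

lemma free_lift_tensor_kernel:
  assumes "p \<in> tensor_kernel \<beta>"
    and "\<And>x x' y. g (x + x', y) = g (x, y) + g (x', y)"
    and "\<And>x y y'. g (x, y + y') = g (x, y) + g (x, y')"
    and "\<And>x b y. g (x * \<beta> b, y) = g (x, \<beta> b * y)"
  shows "free_lift g p = 0"
  using assms(1) by induction (simp_all add: free_lift_diff assms(2-4))

lemma tensor_kernel_uminus: "p \<in> tensor_kernel \<beta> \<Longrightarrow> - p \<in> tensor_kernel \<beta>"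
  using tensor_kernel.diff[OF tensor_kernel.zero] by fastforce

lemma tensor_kernel_add:
  "p \<in> tensor_kernel \<beta> \<Longrightarrow> q \<in> tensor_kernel \<beta> \<Longrightarrow> p + q \<in> tensor_kernel \<beta>"
  using tensor_kernel.diff[of p \<beta> "- q"] tensor_kernel_uminus by fastforce

lemma teq_if_free_t_eq: "free_t u = free_t v \<Longrightarrow> teq \<beta> u v"
  by (simp add: teq_def tensor_kernel.zero)

lemma teq_refl: "teq \<beta> u u"
  by (rule teq_if_free_t_eq) (rule refl)

lemma teq_sym: "teq \<beta> u v \<Longrightarrow> teq \<beta> v u"
  unfolding teq_def using tensor_kernel_uminus by fastforce

lemma teq_trans [trans]: "teq \<beta> u v \<Longrightarrow> teq \<beta> v w \<Longrightarrow> teq \<beta> u w"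
  unfolding teq_def using tensor_kernel_add by fastforce

lemma teq_append:
  assumes "teq \<beta> u u'" "teq \<beta> v v'"
  shows "teq \<beta> (u @ v) (u' @ v')"
proof -
  have "free_t (u @ v) - free_t (u' @ v') = (free_t u - free_t u') + (free_t v - free_t v')"
    by (simp add: algebra_simps)
  also have "\<dots> \<in> tensor_kernel \<beta>"
    using assms unfolding teq_def by (rule tensor_kernel_add)
  finally show ?thesis
    unfolding teq_def .
qed

lemma tlmul_Nil [simp]: "tlmul a [] = []"
  by (simp add: tlmul_def)

lemma tlmul_Cons [simp]: "tlmul a ((x, y) # u) = (a * x, y) # tlmul a u"
  by (simp add: tlmul_def)

lemma tlmul_append [simp]: "tlmul a (u @ v) = tlmul a u @ tlmul a v"
  by (simp add: tlmul_def)

lemma teq_tlmul_zero: "teq \<beta> (tlmul 0 u) []"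
proof (induction u)
  case Nil
  show ?case by (simp add: teq_refl)
next
  case (Cons xy u)
  obtain x y where xy: "xy = (x, y)" by fastforce
  have "simple_t (0 + 0) y - simple_t 0 y - simple_t 0 y \<in> tensor_kernel \<beta>"
    by (rule tensor_kernel.addl)
  then have "teq \<beta> [(0, y)] []"
    using tensor_kernel_uminus by (fastforce simp: teq_def)
  from teq_append[OF this Cons.IH] show ?case by (simp add: xy)
qed

lemma teq_tlmul_add: "teq \<beta> (tlmul (a + a') u) (tlmul a u @ tlmul a' u)"
proof (induction u)
  case Nil
  show ?case by (simp add: teq_refl)
next
  case (Cons xy u)
  obtain x y where xy: "xy = (x, y)" by fastforce
  have "simple_t (a * x + a' * x) y - simple_t (a * x) y - simple_t (a' * x) y \<in> tensor_kernel \<beta>"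
    by (rule tensor_kernel.addl)
  then have "teq \<beta> [((a + a') * x, y)] ([(a * x, y)] @ [(a' * x, y)])"
    by (simp add: teq_def distrib_right diff_diff_eq)
  from teq_append[OF this Cons.IH] have "teq \<beta> (tlmul (a + a') (xy # u))
      ((a * x, y) # (a' * x, y) # tlmul a u @ tlmul a' u)"
    by (simp add: xy)
  also have "teq \<beta> \<dots> (tlmul a (xy # u) @ tlmul a' (xy # u))"
    by (rule teq_if_free_t_eq) (simp add: xy ac_simps)
  finally show ?case .
qed

lemma Psi_Nil [simp]: "Psi [] f = 0"
  by (simp add: Psi_def)

lemma Psi_Cons [simp]: "Psi ((x, y) # u) f = x * f y + Psi u f"
  by (simp add: Psi_def)

lemma Psi_append [simp]: "Psi (u @ v) f = Psi u f + Psi v f"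
  by (simp add: Psi_def)

lemma Psi_tlmul: "Psi (tlmul a u) f = a * Psi u f"
  by (induction u) (auto simp: distrib_left mult.assoc)

lemma Psi_add_fun: "Psi u (\<lambda>x. f x + g x) = Psi u f + Psi u g"
  by (induction u) (auto simp: distrib_left ac_simps)

lemma Psi_mult_right_fun: "Psi u (\<lambda>x. f x * a) = Psi u f * a"
  by (induction u) (auto simp: distrib_right mult.assoc)

lemma Psi_in_HomEA: "Psi u \<in> HomEA \<beta>"
  by (simp add: HomEA_def Psi_add_fun Psi_mult_right_fun)

lemma Psi_teq:
  assumes "teq \<beta> u v" and f: "f \<in> End_lB \<beta>"
  shows "Psi u f = Psi v f"
proof -
  let ?g = "\<lambda>(x, y). x * f y"
  have "free_lift ?g (free_t u - free_t v) = 0"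
    using assms f by (intro free_lift_tensor_kernel[of _ \<beta>])
      (auto simp: teq_def End_lB_def distrib_left distrib_right mult.assoc)
  moreover have "free_lift ?g (free_t w) = Psi w f" for w
    by (simp add: free_lift_free_t Psi_def)
  ultimately show ?thesis by (simp add: free_lift_diff)
qed

lemma End_lB_sum: "(\<And>j. j \<in> J \<Longrightarrow> g j \<in> End_lB \<beta>) \<Longrightarrow> (\<lambda>x. \<Sum>j\<in>J. g j x) \<in> End_lB \<beta>"
  by (simp add: End_lB_def sum.distrib sum_distrib_left)

lemma End_lB_mult_right: "f \<in> End_lB \<beta> \<Longrightarrow> (\<lambda>x. f x * a) \<in> End_lB \<beta>"
  by (simp add: End_lB_def distrib_right mult.assoc)

lemma HomEA_zero: "F \<in> HomEA \<beta> \<Longrightarrow> F (\<lambda>x. 0) = 0"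
  unfolding HomEA_def using End_lB_sum[of "{}"] by fastforce

lemma HomEA_sum:
  assumes F: "F \<in> HomEA \<beta>" and "finite J" and g: "\<And>j. j \<in> J \<Longrightarrow> g j \<in> End_lB \<beta>"
  shows "F (\<lambda>x. \<Sum>j\<in>J. g j x) = (\<Sum>j\<in>J. F (g j))"
  using \<open>finite J\<close> g
proof induction
  case empty
  show ?case using HomEA_zero[OF F] by simp
next
  case (insert j J)
  have "g j \<in> End_lB \<beta>" "(\<lambda>x. \<Sum>j\<in>J. g j x) \<in> End_lB \<beta>"
    using insert.prems by (auto intro: End_lB_sum)
  then have "F (\<lambda>x. g j x + (\<Sum>j\<in>J. g j x)) = F (g j) + F (\<lambda>x. \<Sum>j\<in>J. g j x)"
    using F by (simp add: HomEA_def)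
  with insert show ?case by simp
qed

lemma qb_sum_0 [simp]: "qb_sum 0 \<gamma> u c = []"
  by (simp add: qb_sum_def)

lemma qb_sum_Suc [simp]: "qb_sum (Suc n) \<gamma> u c = qb_sum n \<gamma> u c @ tlmul (c n) (u n)"
  by (simp add: qb_sum_def)

lemma qb_sum_cong: "(\<And>j. j < n \<Longrightarrow> c j = d j) \<Longrightarrow> qb_sum n \<gamma> u c = qb_sum n \<gamma> u d"
  by (induction n) auto

lemma Psi_qb_sum: "Psi (qb_sum n \<gamma> u c) f = (\<Sum>j<n. c j * Psi (u j) f)"
  by (induction n) (auto simp: Psi_tlmul)

lemma teq_qb_sum_zero: "teq \<beta> (qb_sum n \<gamma> u (\<lambda>j. 0)) []"
proof (induction n)
  case 0
  show ?case by (simp add: teq_refl)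
next
  case (Suc n)
  from teq_append[OF this teq_tlmul_zero] show ?case by simp
qed

lemma teq_qb_sum_add:
  "teq \<beta> (qb_sum n \<gamma> u (\<lambda>j. c j + d j)) (qb_sum n \<gamma> u c @ qb_sum n \<gamma> u d)"
proof (induction n)
  case 0
  show ?case by (simp add: teq_refl)
next
  case (Suc n)
  from teq_append[OF Suc.IH teq_tlmul_add]
  have "teq \<beta> (qb_sum (Suc n) \<gamma> u (\<lambda>j. c j + d j))
      ((qb_sum n \<gamma> u c @ qb_sum n \<gamma> u d) @ tlmul (c n) (u n) @ tlmul (d n) (u n))"
    by simp
  also have "teq \<beta> \<dots> (qb_sum (Suc n) \<gamma> u c @ qb_sum (Suc n) \<gamma> u d)"
    by (rule teq_if_free_t_eq) (simp add: ac_simps)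
  finally show ?case .
qed

lemma quasibase_End_lB: "right_D2_quasibase \<beta> n \<gamma> u \<Longrightarrow> j < n \<Longrightarrow> \<gamma> j \<in> End_lB \<beta>"
  by (simp add: right_D2_quasibase_def End_BB_def)

lemma quasibase_teq: "right_D2_quasibase \<beta> n \<gamma> u \<Longrightarrow> teq \<beta> [(a, a')] (qb_sum n \<gamma> u (\<lambda>j. a * \<gamma> j a'))"
  by (simp add: right_D2_quasibase_def)

lemma quasibase_expansion_End_lB:
  assumes "right_D2_quasibase \<beta> n \<gamma> u" and "f \<in> End_lB \<beta>"
  shows "f = (\<lambda>x. \<Sum>j<n. \<gamma> j x * Psi (u j) f)"
proof
  fix x
  show "f x = (\<Sum>j<n. \<gamma> j x * Psi (u j) f)"
    using Psi_teq[OF quasibase_teq[OF assms(1), of 1 x] assms(2)] by (simp add: Psi_qb_sum)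
qed

lemma Psi_quasibase_inverse:
  assumes qb: "right_D2_quasibase \<beta> n \<gamma> u" and F: "F \<in> HomEA \<beta>" and f: "f \<in> End_lB \<beta>"
  shows "Psi (qb_sum n \<gamma> u (\<lambda>j. F (\<gamma> j))) f = F f"
proof -
  have \<gamma>_mult: "(\<lambda>x. \<gamma> j x * Psi (u j) f) \<in> End_lB \<beta>" if "j < n" for j
    using End_lB_mult_right quasibase_End_lB[OF qb that] by blast
  have "F f = F (\<lambda>x. \<Sum>j<n. \<gamma> j x * Psi (u j) f)"
    using quasibase_expansion_End_lB[OF qb f] by simp
  also have "\<dots> = (\<Sum>j<n. F (\<lambda>x. \<gamma> j x * Psi (u j) f))"
    using HomEA_sum[OF F finite_lessThan] \<gamma>_mult by simp
  also have "\<dots> = (\<Sum>j<n. F (\<gamma> j) * Psi (u j) f)"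
    using F quasibase_End_lB[OF qb] by (intro sum.cong) (auto simp: HomEA_def)
  finally show ?thesis by (simp add: Psi_qb_sum)
qed

lemma quasibase_inverse_teq:
  assumes qb: "right_D2_quasibase \<beta> n \<gamma> u"
  shows "teq \<beta> (qb_sum n \<gamma> u (\<lambda>j. Psi t (\<gamma> j))) t"
proof (induction t)
  case Nil
  show ?case using teq_qb_sum_zero by simp
next
  case (Cons xy t)
  obtain x y where xy: "xy = (x, y)" by fastforce
  have "teq \<beta> (qb_sum n \<gamma> u (\<lambda>j. x * \<gamma> j y + Psi t (\<gamma> j)))
      (qb_sum n \<gamma> u (\<lambda>j. x * \<gamma> j y) @ qb_sum n \<gamma> u (\<lambda>j. Psi t (\<gamma> j)))"
    by (rule teq_qb_sum_add)
  also have "teq \<beta> \<dots> ([(x, y)] @ t)"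
    by (rule teq_append[OF teq_sym[OF quasibase_teq[OF qb]] Cons.IH])
  finally show ?case by (simp add: xy)
qed

locale right_D2_split =
  fixes \<beta> :: "'b::ring_1 \<Rightarrow> 'a::ring_1" and n :: nat
    and p :: "('a \<times> 'a) list \<Rightarrow> nat \<Rightarrow> 'a" and i :: "(nat \<Rightarrow> 'a) \<Rightarrow> ('a \<times> 'a) list"
  assumes p_teq: "\<And>u v. teq \<beta> u v \<Longrightarrow> p u = p v"
    and p_vanishes: "\<And>u k. n \<le> k \<Longrightarrow> p u k = 0"
    and p_append: "\<And>u v. p (u @ v) = (\<lambda>k. p u k + p v k)"
    and p_tlmul: "\<And>a u. p (tlmul a u) = (\<lambda>k. a * p u k)"
    and p_trmul: "\<And>b u. p (trmul u (\<beta> b)) = (\<lambda>k. p u k * \<beta> b)"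
    and i_add: "\<And>v w. \<forall>k\<ge>n. v k = 0 \<Longrightarrow> \<forall>k\<ge>n. w k = 0 \<Longrightarrow>
      teq \<beta> (i (\<lambda>k. v k + w k)) (i v @ i w)"
    and i_tlmul: "\<And>a v. \<forall>k\<ge>n. v k = 0 \<Longrightarrow> teq \<beta> (i (\<lambda>k. a * v k)) (tlmul a (i v))"
    and i_trmul: "\<And>b v. \<forall>k\<ge>n. v k = 0 \<Longrightarrow>
      teq \<beta> (i (\<lambda>k. v k * \<beta> b)) (trmul (i v) (\<beta> b))"
    and i_p: "\<And>u. teq \<beta> (i (p u)) u"
begin

definition unit_vec :: "nat \<Rightarrow> nat \<Rightarrow> 'a" where
  "unit_vec j k = (if k = j then 1 else 0)"

definition split_gamma :: "nat \<Rightarrow> 'a \<Rightarrow> 'a" where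
  "split_gamma j x = p [(1, x)] j"

definition split_u :: "nat \<Rightarrow> ('a \<times> 'a) list" where
  "split_u j = i (unit_vec j)"

lemma i_expansion:
  assumes "m \<le> n" and "\<forall>k\<ge>m. v k = 0"
  shows "teq \<beta> (i v) (qb_sum m split_gamma split_u v)"
  using assms
proof (induction m arbitrary: v)
  case 0
  then have "v = (\<lambda>k. 0 * 0)" by auto
  then have "teq \<beta> (i v) (tlmul 0 (i (\<lambda>k. 0)))"
    using i_tlmul[of "\<lambda>k. 0" 0] by simp
  also have "teq \<beta> \<dots> []" by (rule teq_tlmul_zero)
  finally show ?case by simp
next
  case (Suc m)
  define v' where "v' = v(m := 0)"
  have v'_support: "\<forall>k\<ge>m. v' k = 0" and v'_support_n: "\<forall>k\<ge>n. v' k = 0"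
    using Suc.prems by (auto simp: v'_def)
  have unit_support: "\<forall>k\<ge>n. unit_vec m k = 0"
    using Suc.prems by (simp add: unit_vec_def)
  have v_split: "v = (\<lambda>k. v' k + v m * unit_vec m k)"
    by (auto simp: v'_def unit_vec_def)
  have "teq \<beta> (i (\<lambda>k. v' k + v m * unit_vec m k)) (i v' @ i (\<lambda>k. v m * unit_vec m k))"
    using v'_support_n unit_support by (intro i_add) auto
  then have "teq \<beta> (i v) (i v' @ i (\<lambda>k. v m * unit_vec m k))"
    by (simp only: v_split[symmetric])
  also have "teq \<beta> \<dots> (qb_sum m split_gamma split_u v' @ tlmul (v m) (split_u m))"
    using Suc v'_support i_tlmul[OF unit_support] unfolding split_u_def
    by (intro teq_append) auto
  also have "qb_sum m split_gamma split_u v' = qb_sum m split_gamma split_u v"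
    by (rule qb_sum_cong) (simp add: v'_def)
  finally show ?case by simp
qed

lemma split_gamma_End_BB: "split_gamma j \<in> End_BB \<beta>"
proof -
  have "split_gamma j (x + y) = split_gamma j x + split_gamma j y" for x y
  proof -
    have "teq \<beta> [(1, x + y)] ([(1, x)] @ [(1, y)])"
      using tensor_kernel.addr[where x=1 and y=x and y'=y and \<beta>=\<beta>] by (simp add: teq_def diff_diff_eq)
    then have "p [(1, x + y)] = p ([(1, x)] @ [(1, y)])"
      by (rule p_teq)
    then show ?thesis
      unfolding split_gamma_def p_append by simp
  qed
  moreover have "split_gamma j (\<beta> b * x) = \<beta> b * split_gamma j x" for b x
  proof -
    have "teq \<beta> [(1, \<beta> b * x)] (tlmul (\<beta> b) [(1, x)])"
      using tensor_kernel_uminus[OF tensor_kernel.bal[where x=1 and b=b and y=x and \<beta>=\<beta>]] by (simp add: teq_def)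
    then have "p [(1, \<beta> b * x)] = p (tlmul (\<beta> b) [(1, x)])"
      by (rule p_teq)
    then show ?thesis
      unfolding split_gamma_def p_tlmul by simp
  qed
  moreover have "split_gamma j (x * \<beta> b) = split_gamma j x * \<beta> b" for b x
    using p_trmul[where b=b and u="[(1, x)]"] by (simp add: split_gamma_def trmul_def)
  ultimately show ?thesis by (simp add: End_BB_def End_lB_def)
qed

lemma split_u_Tcent:
  assumes "j < n"
  shows "split_u j \<in> Tcent \<beta>"
proof -
  have support: "\<forall>k\<ge>n. unit_vec j k = 0"
    using assms by (simp add: unit_vec_def)
  have "teq \<beta> (tlmul (\<beta> b) (split_u j)) (trmul (split_u j) (\<beta> b))" for b
  proof -
    have "teq \<beta> (tlmul (\<beta> b) (split_u j)) (i (\<lambda>k. \<beta> b * unit_vec j k))"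
      using teq_sym[OF i_tlmul[OF support]] by (simp add: split_u_def)
    also have "(\<lambda>k. \<beta> b * unit_vec j k) = (\<lambda>k. unit_vec j k * \<beta> b)"
      by (simp add: unit_vec_def fun_eq_iff)
    also have "teq \<beta> (i \<dots>) (trmul (split_u j) (\<beta> b))"
      using i_trmul[OF support] by (simp add: split_u_def)
    finally show ?thesis .
  qed
  then show ?thesis by (simp add: Tcent_def)
qed

lemma split_quasibase: "right_D2_quasibase \<beta> n split_gamma split_u"
proof -
  have "teq \<beta> [(a, a')] (qb_sum n split_gamma split_u (\<lambda>j. a * split_gamma j a'))" for a a'
  proof -
    have p_simple: "p [(a, a')] = (\<lambda>j. a * split_gamma j a')"
      using p_tlmul[of a "[(1, a')]"] by (simp add: split_gamma_def)
    have "teq \<beta> [(a, a')] (i (p [(a, a')]))"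
      by (rule teq_sym[OF i_p])
    also have "teq \<beta> \<dots> (qb_sum n split_gamma split_u (p [(a, a')]))"
      by (rule i_expansion) (simp_all add: p_vanishes)
    finally show ?thesis by (simp only: p_simple)
  qed
  then show ?thesis
    using split_gamma_End_BB split_u_Tcent by (simp add: right_D2_quasibase_def)
qed

end

lemma right_D2_iff_split: "right_D2 \<beta> \<longleftrightarrow> (\<exists>n p i. right_D2_split \<beta> n p i)"
  unfolding right_D2_def right_D2_split_def by blast

lemma right_D2_quasibase_exists:
  "right_D2 \<beta> \<Longrightarrow> \<exists>n \<gamma> u. right_D2_quasibase \<beta> n \<gamma> u"
  using right_D2_split.split_quasibase right_D2_iff_split by blast

theorem lemma4p3:
  fixes \<beta> :: "'b::ring_1 \<Rightarrow> 'a::ring_1"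
  assumes hom: "ring_hom_1 \<beta>"
    and D2: "right_D2 \<beta>"
  shows
    \<comment> \<open>Psi is well defined on A \<otimes>_B A\<close>
    "(\<forall>u v. teq \<beta> u v \<longrightarrow> (\<forall>f\<in>End_lB \<beta>. Psi u f = Psi v f))
     \<comment> \<open>it lands in Hom(E_A, A_A)\<close>
     \<and> (\<forall>u. Psi u \<in> HomEA \<beta>)
     \<comment> \<open>it is additive and left B-linear\<close>
     \<and> (\<forall>u v. \<forall>f\<in>End_lB \<beta>. Psi (u @ v) f = Psi u f + Psi v f)
     \<and> (\<forall>b u. \<forall>f\<in>End_lB \<beta>. Psi (tlmul (\<beta> b) u) f = \<beta> b * Psi u f)
     \<comment> \<open>it is injective and surjective\<close>
     \<and> (\<forall>u v. (\<forall>f\<in>End_lB \<beta>. Psi u f = Psi v f) \<longrightarrow> teq \<beta> u v)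
     \<and> (\<forall>F\<in>HomEA \<beta>. \<exists>u. \<forall>f\<in>End_lB \<beta>. Psi u f = F f)
     \<comment> \<open>for every right D2 quasibase, F \<mapsto> \<Sum>_j F(gamma_j) u_j is the inverse\<close>
     \<and> (\<forall>n \<gamma> u. right_D2_quasibase \<beta> n \<gamma> u \<longrightarrow>
          (\<forall>F\<in>HomEA \<beta>. \<forall>f\<in>End_lB \<beta>. Psi (qb_sum n \<gamma> u (\<lambda>j. F (\<gamma> j))) f = F f)
        \<and> (\<forall>t. teq \<beta> (qb_sum n \<gamma> u (\<lambda>j. Psi t (\<gamma> j))) t))"
proof -
  obtain n \<gamma> u where qb: "right_D2_quasibase \<beta> n \<gamma> u"
    using right_D2_quasibase_exists[OF D2] by blast
  have injective: "teq \<beta> s t" if "\<forall>f\<in>End_lB \<beta>. Psi s f = Psi t f" for s t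
  proof -
    have "qb_sum n \<gamma> u (\<lambda>j. Psi s (\<gamma> j)) = qb_sum n \<gamma> u (\<lambda>j. Psi t (\<gamma> j))"
      using that quasibase_End_lB[OF qb] by (intro qb_sum_cong) blast
    then show ?thesis
      using quasibase_inverse_teq[OF qb, of s] quasibase_inverse_teq[OF qb, of t]
      by (metis teq_sym teq_trans)
  qed
  have surjective: "\<exists>s. \<forall>f\<in>End_lB \<beta>. Psi s f = F f" if "F \<in> HomEA \<beta>" for F
    using Psi_quasibase_inverse[OF qb that] by blast
  show ?thesis
    using Psi_teq Psi_in_HomEA Psi_tlmul injective surjective
      Psi_quasibase_inverse quasibase_inverse_teq by auto
qed

end
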